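(* In the algebra $\mathcal O_q$ defined in the context, for all $n\in\mathbb N$: $$\mathcal W_{-n}=-(q-q^{-1})^{-1}\sum_{k=0}^n\sum_{\ell=0}^k\binom{k}{\ell}q^{k-2\ell}[2]_q^{-k-2}B_{(k-2\ell)\delta+\alpha_0}\tilde{\mathcal G}_{n-k},$$ $$\mathcal W_{n+1}=-(q-q^{-1})^{-1}\sum_{k=0}^n\sum_{\ell=0}^k\binom{k}{\ell}q^{2\ell-k}[2]_q^{-k-2}B_{(k-2\ell)\delta+\alpha_1}\tilde{\mathcal G}_{n-k}.$$
   Context: All algebras are associative and unital over a field $\mathbb F$; $q\in\mathbb F$ is nonzero and not a root of unity; $[n]_q=(q^n-q^{-n})/(q-q^{-1})$. For elements $X,Y$ of an algebra, $[X,Y]=XY-YX$ and $[X,Y]_q=qXY-q^{-1}YX$. Let $\rho=-(q^2-q^{-2})^2$. The algebra $\mathcal O_q$ is defined by generators $\mathcal W_{-k},\mathcal W_{k+1},\mathcal G_{k+1},\tilde{\mathcal G}_{k+1}$ ($k\in\mathbb N$) and the following relations for all $k,\ell\in\mathbb N$: $[\mathcal W_0,\mathcal W_{k+1}]=[\mathcal W_{-k},\mathcal W_1]=(\tilde{\mathcal G}_{k+1}-\mathcal G_{k+1})/(q+q^{-1})$; $[\mathcal W_0,\mathcal G_{k+1}]_q=[\tilde{\mathcal G}_{k+1},\mathcal W_0]_q=\rho\mathcal W_{-k-1}-\rho\mathcal W_{k+1}$; $[\mathcal G_{k+1},\mathcal W_1]_q=[\mathcal W_1,\tilde{\mathcal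 G}_{k+1}]_q=\rho\mathcal W_{k+2}-\rho\mathcal W_{-k}$; $[\mathcal W_{-k},\mathcal W_{-\ell}]=0$, $[\mathcal W_{k+1},\mathcal W_{\ell+1}]=0$; $[\mathcal W_{-k},\mathcal W_{\ell+1}]+[\mathcal W_{k+1},\mathcal W_{-\ell}]=0$; $[\mathcal W_{-k},\mathcal G_{\ell+1}]+[\mathcal G_{k+1},\mathcal W_{-\ell}]=0$; $[\mathcal W_{-k},\tilde{\mathcal G}_{\ell+1}]+[\tilde{\mathcal G}_{k+1},\mathcal W_{-\ell}]=0$; $[\mathcal W_{k+1},\mathcal G_{\ell+1}]+[\mathcal G_{k+1},\mathcal W_{\ell+1}]=0$; $[\mathcal W_{k+1},\tilde{\mathcal G}_{\ell+1}]+[\tilde{\mathcal G}_{k+1},\mathcal W_{\ell+1}]=0$; $[\mathcal G_{k+1},\mathcal G_{\ell+1}]=0$, $[\tilde{\mathcal G}_{k+1},\tilde{\mathcal G}_{\ell+1}]=0$; $[\tilde{\mathcal G}_{k+1},\mathcal G_{\ell+1}]+[\mathcal G_{k+1},\tilde{\mathcal G}_{\ell+1}]=0$. Convention: $\tilde{\mathcal G}_0=-(q-q^{-1})[2]_q^2$. Define $B_\delta=q^{-2}\mathcal W_1\mathcal W_0-\mathcal W_0\mathcal W_1$; $B_{\alpha_0}=\mathcal W_0$, $B_{\delta+\alpha_0}=\mathcal W_1+\frac{q[B_\delta,\mathcal W_0]}{(q-q^{-1})(q^2-q^{-2})}$, $B_{n\delta+\alpha_0}=B_{(n-2)\delta+\alpha_0}+\frac{q[B_\delta,B_{(n-1)\delta+\alpha_0}]}{(q-q^{-1})(q^2-q^{-2})}$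 for $n\ge2$; $B_{\alpha_1}=\mathcal W_1$, $B_{\delta+\alpha_1}=\mathcal W_0-\frac{q[B_\delta,\mathcal W_1]}{(q-q^{-1})(q^2-q^{-2})}$, $B_{n\delta+\alpha_1}=B_{(n-2)\delta+\alpha_1}-\frac{q[B_\delta,B_{(n-1)\delta+\alpha_1}]}{(q-q^{-1})(q^2-q^{-2})}$ for $n\ge2$. For negative integers $k$, set $B_{k\delta+\alpha_0}=B_{(-k-1)\delta+\alpha_1}$ and $B_{k\delta+\alpha_1}=B_{(-k-1)\delta+\alpha_0}$. *)

theory Defs
  imports Main
begin

text \<open>An associative unital F-algebra is modelled as a ring_1 type 'a together with
a unital ring homomorphism sc from the field 'f into the centre of 'a.
The algebra O_q is presented by generators and relations; an identity holds in O_q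
iff it holds for every family of elements satisfying the relations in every F-algebra.
Indexing: Wm k = W_{-k}, Wp k = W_{k+1}, G k = G_{k+1}, Gt k = tilde G_{k+1}.\<close>

definition is_alg_map :: "('f::field \<Rightarrow> 'a::ring_1) \<Rightarrow> bool" where
  "is_alg_map sc \<longleftrightarrow> sc 1 = 1 \<and> (\<forall>x y. sc (x + y) = sc x + sc y)
     \<and> (\<forall>x y. sc (x * y) = sc x * sc y) \<and> (\<forall>c a. sc c * a = a * sc c)"

definition comm :: "'a::ring_1 \<Rightarrow> 'a \<Rightarrow> 'a" where
  "comm X Y = X * Y - Y * X"

definition qcomm :: "('f::field \<Rightarrow> 'a::ring_1) \<Rightarrow> 'f \<Rightarrow> 'a \<Rightarrow> 'a \<Rightarrow> 'a" where
  "qcomm sc q X Y = sc q * X * Y - sc (inverse q) * Y * X"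

definition qint :: "'f::field \<Rightarrow> nat \<Rightarrow> 'f" where
  "qint q n = (q ^ n - inverse q ^ n) / (q - inverse q)"

definition rho :: "'f::field \<Rightarrow> 'f" where
  "rho q = - ((q ^ 2 - inverse q ^ 2) ^ 2)"

definition Oq_rel :: "('f::field \<Rightarrow> 'a::ring_1) \<Rightarrow> 'f \<Rightarrow> (nat \<Rightarrow> 'a) \<Rightarrow> (nat \<Rightarrow> 'a)
    \<Rightarrow> (nat \<Rightarrow> 'a) \<Rightarrow> (nat \<Rightarrow> 'a) \<Rightarrow> bool" where
  "Oq_rel sc q Wm Wp G Gt \<longleftrightarrow>
    (\<forall>k. comm (Wm 0) (Wp k) = sc (inverse (q + inverse q)) * (Gt k - G k)
       \<and> comm (Wm k) (Wp 0) = sc (inverse (q + inverse q)) * (Gt k - G k)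
       \<and> qcomm sc q (Wm 0) (G k) = sc (rho q) * (Wm (k+1) - Wp k)
       \<and> qcomm sc q (Gt k) (Wm 0) = sc (rho q) * (Wm (k+1) - Wp k)
       \<and> qcomm sc q (G k) (Wp 0) = sc (rho q) * (Wp (k+1) - Wm k)
       \<and> qcomm sc q (Wp 0) (Gt k) = sc (rho q) * (Wp (k+1) - Wm k))
  \<and> (\<forall>k l. comm (Wm k) (Wm l) = 0 \<and> comm (Wp k) (Wp l) = 0
       \<and> comm (Wm k) (Wp l) + comm (Wp k) (Wm l) = 0
       \<and> comm (Wm k) (G l) + comm (G k) (Wm l) = 0
       \<and> comm (Wm k) (Gt l) + comm (Gt k) (Wm l) = 0
       \<and> comm (Wp k) (G l) + comm (G k) (Wp l) = 0
       \<and> comm (Wp k) (Gt l) + comm (Gt k) (Wp l) = 0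
       \<and> comm (G k) (G l) = 0 \<and> comm (Gt k) (Gt l) = 0
       \<and> comm (Gt k) (G l) + comm (G k) (Gt l) = 0)"

definition Gtil :: "('f::field \<Rightarrow> 'a::ring_1) \<Rightarrow> 'f \<Rightarrow> (nat \<Rightarrow> 'a) \<Rightarrow> nat \<Rightarrow> 'a" where
  "Gtil sc q Gt n = (if n = 0 then sc (- (q - inverse q) * (qint q 2) ^ 2) else Gt (n - 1))"

definition Bdelta :: "('f::field \<Rightarrow> 'a::ring_1) \<Rightarrow> 'f \<Rightarrow> 'a \<Rightarrow> 'a \<Rightarrow> 'a" where
  "Bdelta sc q W0 W1 = sc (inverse q ^ 2) * W1 * W0 - W0 * W1"

definition Bcoef :: "'f::field \<Rightarrow> 'f" where
  "Bcoef q = q / ((q - inverse q) * (q ^ 2 - inverse q ^ 2))"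

text \<open>B0 n = B_{n delta + alpha_0}, B1 n = B_{n delta + alpha_1} for n in N.\<close>
fun B0 :: "('f::field \<Rightarrow> 'a::ring_1) \<Rightarrow> 'f \<Rightarrow> 'a \<Rightarrow> 'a \<Rightarrow> nat \<Rightarrow> 'a" where
  "B0 sc q W0 W1 0 = W0"
| "B0 sc q W0 W1 (Suc 0) = W1 + sc (Bcoef q) * comm (Bdelta sc q W0 W1) W0"
| "B0 sc q W0 W1 (Suc (Suc n)) = B0 sc q W0 W1 n
     + sc (Bcoef q) * comm (Bdelta sc q W0 W1) (B0 sc q W0 W1 (Suc n))"

fun B1 :: "('f::field \<Rightarrow> 'a::ring_1) \<Rightarrow> 'f \<Rightarrow> 'a \<Rightarrow> 'a \<Rightarrow> nat \<Rightarrow> 'a" where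
  "B1 sc q W0 W1 0 = W1"
| "B1 sc q W0 W1 (Suc 0) = W0 - sc (Bcoef q) * comm (Bdelta sc q W0 W1) W1"
| "B1 sc q W0 W1 (Suc (Suc n)) = B1 sc q W0 W1 n
     - sc (Bcoef q) * comm (Bdelta sc q W0 W1) (B1 sc q W0 W1 (Suc n))"

text \<open>Integer-indexed versions: B_{m delta + alpha_0}, B_{m delta + alpha_1} for m in Z.\<close>
definition BZ0 :: "('f::field \<Rightarrow> 'a::ring_1) \<Rightarrow> 'f \<Rightarrow> 'a \<Rightarrow> 'a \<Rightarrow> int \<Rightarrow> 'a" where
  "BZ0 sc q W0 W1 m = (if 0 \<le> m then B0 sc q W0 W1 (nat m) else B1 sc q W0 W1 (nat (- m - 1)))"

definition BZ1 :: "('f::field \<Rightarrow> 'a::ring_1) \<Rightarrow> 'f \<Rightarrow> 'a \<Rightarrow> 'a \<Rightarrow> int \<Rightarrow> 'a" where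
  "BZ1 sc q W0 W1 m = (if 0 \<le> m then B1 sc q W0 W1 (nat m) else B0 sc q W0 W1 (nat (- m - 1)))"

end

theory Submission
  imports Defs
begin

text \<open>
Write B_m = B_(m delta + alpha_0) for integers m, and let Z = tilde G_1 + q B_delta. The degree-one
relations show that Z commutes with W_0 and W_1, hence with every B_m; with the recursion defining
the B's this gives [B_m, tilde G_1] = kappa (B_(m+1) - B_(m-1)) for all m, where
kappa = - rho / [2]_q. The inner sums P_s^k = sum_l (k choose l) q^(k-2l) B_(k-2l+s) are the powers
(q T + q^-1 T^-1)^k of the index shift T applied to B at s, so they obey Pascal's rule and inherit
the commutator rule. Consequently R_s(n) = sum_k alpha_k P_s^k tilde G_(n-k) satisfies
  R_s(n+1) = alpha_0 B_s tilde G_(n+1) + R_(s-1)(n) - rho^-1 q [R_s(n), tilde G_1]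
           = alpha_0 B_s tilde G_(n+1) + R_(s+1)(n) + rho^-1 q^-1 [R_s(n), tilde G_1].
These are exactly the recursions that [tilde G_(n+1), W_0]_q = rho (W_(-n-1) - W_(n+1)) and
[W_1, tilde G_(n+1)]_q = rho (W_(n+2) - W_(-n)) impose on W_(-n) and W_(n+1), once
[W_0, tilde G_(n+1)] is rewritten as [W_(-n), tilde G_1]; so W_(-n) = R_0(n) and
W_(n+1) = R_(-1)(n) by induction on n. Since B_(m delta + alpha_1) = B_(-m-1), reversing the inner
sum turns R_(-1)(n) into the alpha_1-formula.
\<close>

section \<open>Commutators\<close>

lemma comm_add_left: "comm (x + y) z = comm x z + comm y z"
  and comm_diff_left: "comm (x - y) z = comm x z - comm y z"
  and comm_add_right: "comm x (y + z) = comm x y + comm x z"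
  and comm_mult_left: "comm (x * y) z = x * comm y z + comm x z * y"
  and comm_swap: "comm x y = - comm y x"
  by (simp_all add: comm_def algebra_simps)

lemma comm_zero_right [simp]: "comm x 0 = 0"
  by (simp add: comm_def)

lemma comm_Jacobi: "comm (comm x y) z = comm x (comm y z) - comm y (comm x z)"
  by (simp add: comm_def algebra_simps)

lemma comm_of_nat_left: "comm (of_nat n * x) y = of_nat n * comm x y"
  by (simp add: comm_def right_diff_distrib mult_of_nat_commute mult.assoc)

lemma comm_sum_left: "comm (sum f A) z = (\<Sum>i\<in>A. comm (f i) z)"
  by (simp add: comm_def sum_distrib_left sum_distrib_right sum_subtractf)

section \<open>Scalars and the elements B\<close>

locale alg_map =
  fixes sc :: "'f::field \<Rightarrow> 'a::ring_1"
  assumes alg_map: "is_alg_map sc"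
begin

lemma sc_one [simp]: "sc 1 = 1"
  and sc_add: "sc (x + y) = sc x + sc y"
  and sc_mult: "sc (x * y) = sc x * sc y"
  and sc_commute: "sc c * a = a * sc c"
  using alg_map unfolding is_alg_map_def by blast+

lemma sc_zero [simp]: "sc 0 = 0"
  using sc_add[of 0 0] by simp

lemma sc_minus: "sc (- x) = - sc x"
  using sc_add[of x "- x"] by (simp add: eq_neg_iff_add_eq_0 add.commute)

lemma sc_diff: "sc (x - y) = sc x - sc y"
  by (simp only: diff_conv_add_uminus sc_add sc_minus)

lemma sc_sc_mult [simp]: "sc a * (sc b * x) = sc (a * b) * x"
  by (simp add: sc_mult mult.assoc)

lemma sc_left_commute: "x * (sc a * y) = sc a * (x * y)"
  by (metis mult.assoc sc_commute)

lemma comm_sc_left: "comm (sc a * x) y = sc a * comm x y"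
  and comm_sc_right: "comm x (sc a * y) = sc a * comm x y"
  and comm_sc: "comm (sc a) y = 0"
  by (simp_all add: comm_def right_diff_distrib sc_left_commute sc_commute mult.assoc)

lemma sc_mult_cancel:
  assumes "a \<noteq> 0"
  shows "sc a * x = sc a * y \<longleftrightarrow> x = y"
proof
  assume "sc a * x = sc a * y"
  then have "sc (inverse a) * (sc a * x) = sc (inverse a) * (sc a * y)"
    by simp
  with assms show "x = y"
    by simp
qed simp

lemma sc_mult_eq_iff:
  assumes "a \<noteq> 0"
  shows "sc a * x = y \<longleftrightarrow> x = sc (inverse a) * y"
  using assms sc_mult_cancel[OF assms, of x "sc (inverse a) * y"] by simp

lemma qcomm_eq_comm_yx: "qcomm sc q x y = sc (q - inverse q) * (y * x) + sc q * comm x y"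
  by (simp add: qcomm_def comm_def sc_diff algebra_simps)

lemma qcomm_eq_comm_xy: "qcomm sc q x y = sc (q - inverse q) * (x * y) + sc (inverse q) * comm x y"
  by (simp add: qcomm_def comm_def sc_diff algebra_simps)

lemma qcomm_diff_left: "qcomm sc q (x - y) z = qcomm sc q x z - qcomm sc q y z"
  by (simp add: qcomm_def algebra_simps)

lemma qcomm_diff_right: "qcomm sc q x (y - z) = qcomm sc q x y - qcomm sc q x z"
  by (simp add: qcomm_def algebra_simps)

lemma qcomm_sc_left: "qcomm sc q (sc a * x) y = sc a * qcomm sc q x y"
  by (simp add: qcomm_def right_diff_distrib mult.assoc sc_left_commute[of y a x]
      mult.commute[of a])

lemma qcomm_sc_right: "qcomm sc q x (sc a * y) = sc a * qcomm sc q x y"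
  by (simp add: qcomm_def right_diff_distrib mult.assoc sc_left_commute[of x a y]
      mult.commute[of a])

lemma qcomm_swap_diff: "qcomm sc q x y - qcomm sc q y x = sc (q + inverse q) * comm x y"
  by (simp add: qcomm_def comm_def sc_add algebra_simps)

lemma qcomm_comm_Bdelta_left:
  assumes "q \<noteq> 0"
  shows "qcomm sc q x (comm x y) = - (sc q * comm x (Bdelta sc q x y))"
proof -
  have q_inverse_sq: "q * (inverse q * inverse q) = inverse q"
    using assms by (simp flip: mult.assoc)
  show ?thesis
    by (simp add: qcomm_def comm_def Bdelta_def algebra_simps sc_left_commute[of x] power2_eq_square
        q_inverse_sq)
qed

lemma qcomm_comm_Bdelta_right:
  assumes "q \<noteq> 0"
  shows "qcomm sc q (comm x y) y = sc q * comm y (Bdelta sc q x y)"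
proof -
  have q_inverse_sq: "q * (inverse q * inverse q) = inverse q"
    using assms by (simp flip: mult.assoc)
  show ?thesis
    by (simp add: qcomm_def comm_def Bdelta_def algebra_simps sc_left_commute[of y] power2_eq_square
        q_inverse_sq)
qed

lemma comm_Bdelta_eq_0:
  "comm x z = 0 \<Longrightarrow> comm y z = 0 \<Longrightarrow> comm (Bdelta sc q x y) z = 0"
  by (simp add: Bdelta_def comm_diff_left comm_mult_left comm_sc)

lemma comm_B0_eq_0:
  "comm x z = 0 \<Longrightarrow> comm y z = 0 \<Longrightarrow> comm (B0 sc q x y n) z = 0"
  by (induction n rule: induct_nat_012)
    (simp_all add: comm_add_left comm_sc_left comm_Jacobi comm_Bdelta_eq_0)

lemma comm_B1_eq_0:
  "comm x z = 0 \<Longrightarrow> comm y z = 0 \<Longrightarrow> comm (B1 sc q x y n) z = 0"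
  by (induction n rule: induct_nat_012)
    (simp_all add: comm_diff_left comm_sc_left comm_Jacobi comm_Bdelta_eq_0)

lemma comm_BZ0_eq_0:
  "comm x z = 0 \<Longrightarrow> comm y z = 0 \<Longrightarrow> comm (BZ0 sc q x y m) z = 0"
  by (simp add: BZ0_def comm_B0_eq_0 comm_B1_eq_0)

lemma BZ1_eq_BZ0: "BZ1 sc q x y m = BZ0 sc q x y (- m - 1)"
  by (simp add: BZ0_def BZ1_def)

lemma BZ0_recurrence:
  "BZ0 sc q x y (m + 1) - BZ0 sc q x y (m - 1)
     = sc (Bcoef q) * comm (Bdelta sc q x y) (BZ0 sc q x y m)"
proof (cases m)
  case (nonneg n)
  then show ?thesis by (cases n) (simp_all add: BZ0_def comm_def nat_add_distrib)
next
  case (neg n)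
  then show ?thesis by (cases n) (simp_all add: BZ0_def comm_def nat_add_distrib)
qed

end

section \<open>Binomial sums along the index shift\<close>

lemma sum_binomial_Suc:
  fixes g :: "nat \<Rightarrow> 'a::semiring_1"
  shows "(\<Sum>l\<le>Suc k. of_nat (Suc k choose l) * g l)
    = (\<Sum>l\<le>k. of_nat (k choose l) * (g l + g (Suc l)))"
proof -
  have lower: "(\<Sum>l\<le>Suc k. of_nat (k choose l) * g l)
      = (\<Sum>l\<le>k. of_nat (k choose l) * g l)"
    by (simp add: binomial_eq_0)
  have "(\<Sum>l\<le>Suc k. of_nat (Suc k choose l) * g l)
      = g 0 + (\<Sum>l\<le>k. of_nat (Suc k choose Suc l) * g (Suc l))"
    by (subst sum.atMost_Suc_shift) simp
  also have "\<dots> = g 0 + (\<Sum>l\<le>k. of_nat (k choose Suc l) * g (Suc l))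
      + (\<Sum>l\<le>k. of_nat (k choose l) * g (Suc l))"
    by (simp add: distrib_right sum.distrib add_ac)
  also have "g 0 + (\<Sum>l\<le>k. of_nat (k choose Suc l) * g (Suc l))
      = (\<Sum>l\<le>k. of_nat (k choose l) * g l)"
    using sum.atMost_Suc_shift[of "\<lambda>l. of_nat (k choose l) * g l" k] lower by simp
  finally show ?thesis
    by (simp add: distrib_left sum.distrib)
qed

context alg_map
begin

lemma sc_of_nat [simp]: "sc (of_nat n) = of_nat n"
  by (induction n) (simp_all add: sc_add)

lemma of_nat_mult_sc: "of_nat n * (sc a * x) = sc (of_nat n * a) * x"
  by (simp add: sc_mult mult.assoc)

text \<open>shift_binomial q b s k = ((q T + q^-1 T^-1)^k b)(s), where (T b)(m) = b (m + 1).\<close>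

definition shift_binomial :: "'f \<Rightarrow> (int \<Rightarrow> 'a) \<Rightarrow> int \<Rightarrow> nat \<Rightarrow> 'a" where
  "shift_binomial q b s k =
    (\<Sum>l\<le>k. of_nat (k choose l)
      * (sc (q powi (int k - 2 * int l)) * b (int k - 2 * int l + s)))"

lemma shift_binomial_0 [simp]: "shift_binomial q b s 0 = b s"
  by (simp add: shift_binomial_def)

lemma shift_binomial_Suc:
  assumes "q \<noteq> 0"
  shows "shift_binomial q b s (Suc k)
    = sc q * shift_binomial q b (s + 1) k + sc (inverse q) * shift_binomial q b (s - 1) k"
proof -
  define g where "g l = sc (q powi (int (Suc k) - 2 * int l)) * b (int (Suc k) - 2 * int l + s)"
    for l
  define u where "u r l = sc (q powi (int k - 2 * int l)) * b (int k - 2 * int l + r)" for r l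
  have up: "g l = sc q * u (s + 1) l" for l
  proof -
    have "q powi (int (Suc k) - 2 * int l) = q powi ((int k - 2 * int l) + 1)"
      by (simp add: algebra_simps)
    also have "\<dots> = q * q powi (int k - 2 * int l)"
      using assms by (intro power_int_add_1') simp
    finally show ?thesis
      by (simp add: g_def u_def algebra_simps)
  qed
  have down: "g (Suc l) = sc (inverse q) * u (s - 1) l" for l
  proof -
    have "int (Suc k) - 2 * int (Suc l) = (int k - 2 * int l) - 1"
      by simp
    then have "q powi (int (Suc k) - 2 * int (Suc l)) = inverse q * q powi (int k - 2 * int l)"
      using assms by (simp add: power_int_diff divide_inverse mult.commute)
    then show ?thesis
      by (simp add: g_def u_def algebra_simps)
  qed
  have "shift_binomial q b s (Suc k) = (\<Sum>l\<le>k. of_nat (k choose l) * (g l + g (Suc l)))"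
    unfolding shift_binomial_def g_def by (rule sum_binomial_Suc)
  also have "\<dots> = (\<Sum>l\<le>k. sc q * (of_nat (k choose l) * u (s + 1) l)
      + sc (inverse q) * (of_nat (k choose l) * u (s - 1) l))"
    unfolding down by (simp only: up distrib_left sc_left_commute[of "of_nat _"])
  finally show ?thesis
    by (simp add: shift_binomial_def u_def sum.distrib sum_distrib_left)
qed

lemma comm_shift_binomial:
  assumes "\<And>m. comm (b m) x = sc c * (b (m + 1) - b (m - 1))"
  shows "comm (shift_binomial q b s k) x
    = sc c * (shift_binomial q b (s + 1) k - shift_binomial q b (s - 1) k)"
proof -
  have "comm (of_nat n * (sc a * b (j + s))) x
      = sc c * (of_nat n * (sc a * b (j + (s + 1))) - of_nat n * (sc a * b (j + (s - 1))))"
    for n a j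
    using assms[of "j + s"]
    by (simp add: comm_of_nat_left comm_sc_left sc_left_commute[of "of_nat _"]
        right_diff_distrib mult.commute add.assoc add_diff_eq)
  then show ?thesis
    unfolding shift_binomial_def comm_sum_left
    by (simp add: right_diff_distrib sum_subtractf sum_distrib_left)
qed

lemma shift_binomial_reflect:
  "shift_binomial q b s k
    = (\<Sum>l\<le>k. of_nat (k choose l)
        * (sc (q powi (2 * int l - int k)) * b (2 * int l - int k + s)))"
proof -
  have "shift_binomial q b s k
      = (\<Sum>l\<le>k. of_nat (k choose (k - l))
          * (sc (q powi (int k - 2 * int (k - l))) * b (int k - 2 * int (k - l) + s)))"
    unfolding shift_binomial_def atMost_atLeast0 by (subst sum.atLeastAtMost_rev) simp
  also have "\<dots> = (\<Sum>l\<le>k. of_nat (k choose l)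
      * (sc (q powi (2 * int l - int k)) * b (2 * int l - int k + s)))"
  proof (rule sum.cong[OF refl])
    fix l
    assume "l \<in> {..k}"
    then have "l \<le> k" by simp
    moreover have "int k - 2 * int (k - l) = 2 * int l - int k"
      using \<open>l \<le> k\<close> by (simp add: of_nat_diff)
    ultimately show "of_nat (k choose (k - l))
          * (sc (q powi (int k - 2 * int (k - l))) * b (int k - 2 * int (k - l) + s))
        = of_nat (k choose l) * (sc (q powi (2 * int l - int k)) * b (2 * int l - int k + s))"
      by (simp flip: binomial_symmetric)
  qed
  finally show ?thesis .
qed

lemma shift_binomial_Suc_comm:
  assumes "q \<noteq> 0" and "c \<noteq> 0"
    and "\<And>m. comm (b m) x = sc c * (b (m + 1) - b (m - 1))"
  shows "shift_binomial q b s (Suc k) = sc (q + inverse q) * shift_binomial q b (s - 1) k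
      + sc (q / c) * comm (shift_binomial q b s k) x"
    and "shift_binomial q b s (Suc k) = sc (q + inverse q) * shift_binomial q b (s + 1) k
      - sc (inverse q / c) * comm (shift_binomial q b s k) x"
proof -
  let ?P = "shift_binomial q b"
  have "sc (r / c) * comm (?P s k) x = sc r * (?P (s + 1) k - ?P (s - 1) k)" for r
    using assms(2) by (simp add: comm_shift_binomial[OF assms(3)])
  then show "?P s (Suc k) = sc (q + inverse q) * ?P (s - 1) k + sc (q / c) * comm (?P s k) x"
    and "?P s (Suc k) = sc (q + inverse q) * ?P (s + 1) k - sc (inverse q / c) * comm (?P s k) x"
    using assms(1) by (simp_all add: shift_binomial_Suc sc_add distrib_right right_diff_distrib)
qed

end

section \<open>The relations of O_q\<close>

lemma diff_inverse_nonzero: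
  fixes q :: "'f::field"
  assumes "q \<noteq> 0" and "q ^ 2 \<noteq> 1"
  shows "q - inverse q \<noteq> 0"
proof
  assume "q - inverse q = 0"
  then have "q * q = q * inverse q"
    by simp
  then have "q * q = 1"
    using assms(1) by simp
  with assms(2) show False
    by (simp add: power2_eq_square)
qed

lemma add_inverse_nonzero:
  fixes q :: "'f::field"
  assumes "q \<noteq> 0" and "q ^ 4 \<noteq> 1"
  shows "q + inverse q \<noteq> 0"
proof
  assume "q + inverse q = 0"
  then have "q * (q + inverse q) = 0"
    by simp
  then have "q * q = -1"
    using assms(1) by (simp add: distrib_left eq_neg_iff_add_eq_0)
  have "q ^ 4 = (q * q) * (q * q)"
    by (simp add: power_numeral_reduce ac_simps)
  also have "\<dots> = 1"
    using \<open>q * q = -1\<close> by simp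
  finally have "q ^ 4 = 1" .
  with assms(2) show False ..
qed

lemma qint_2:
  fixes q :: "'f::field"
  assumes "q \<noteq> 0" and "q - inverse q \<noteq> 0"
  shows "qint q 2 = q + inverse q"
  using assms by (simp add: qint_def field_simps power2_eq_square)

lemma rho_factor: "rho q = - (((q - inverse q) * (q + inverse q)) ^ 2)"
  by (simp add: rho_def algebra_simps power2_eq_square)

lemma div_Bcoef:
  fixes q :: "'f::field"
  assumes "q \<noteq> 0" and "q + inverse q \<noteq> 0"
  shows "q / Bcoef q = - rho q / (q + inverse q)"
proof -
  have "q ^ 2 - inverse q ^ 2 = (q - inverse q) * (q + inverse q)"
    by (simp add: algebra_simps power2_eq_square)
  then have "q / Bcoef q = (q - inverse q) * (q - inverse q) * (q + inverse q)"
    using assms(1) by (simp add: Bcoef_def mult.assoc)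
  also have "\<dots> = - rho q / (q + inverse q)"
    using assms(2) by (simp add: rho_factor power2_eq_square field_simps)
  finally show ?thesis .
qed

locale Oq_family = alg_map sc for sc :: "'f::field \<Rightarrow> 'a::ring_1" +
  fixes q :: 'f and Wm Wp G Gt :: "nat \<Rightarrow> 'a"
  assumes q_nonzero: "q \<noteq> 0"
    and not_root_of_unity: "\<forall>m::nat. m > 0 \<longrightarrow> q ^ m \<noteq> 1"
    and relations: "Oq_rel sc q Wm Wp G Gt"
begin

lemma diff_inverse_q_nonzero: "q - inverse q \<noteq> 0"
  using not_root_of_unity by (intro diff_inverse_nonzero q_nonzero) auto

lemma add_inverse_q_nonzero: "q + inverse q \<noteq> 0"
  using not_root_of_unity by (intro add_inverse_nonzero q_nonzero) auto

lemma rho_nonzero: "rho q \<noteq> 0"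
  using diff_inverse_q_nonzero add_inverse_q_nonzero by (simp add: rho_factor)

lemma comm_W0_W1: "comm (Wm 0) (Wp 0) = sc (inverse (q + inverse q)) * (Gt 0 - G 0)"
  and qcomm_W0_G1: "qcomm sc q (Wm 0) (G 0) = qcomm sc q (Gt 0) (Wm 0)"
  and qcomm_G1_W1: "qcomm sc q (G 0) (Wp 0) = qcomm sc q (Wp 0) (Gt 0)"
  and qcomm_Gt_W0: "qcomm sc q (Gt k) (Wm 0) = sc (rho q) * (Wm (Suc k) - Wp k)"
  and qcomm_W1_Gt: "qcomm sc q (Wp 0) (Gt k) = sc (rho q) * (Wp (Suc k) - Wm k)"
  and comm_Wm_Gt: "comm (Wm k) (Gt l) + comm (Gt k) (Wm l) = 0"
  and comm_Wp_Gt: "comm (Wp k) (Gt l) + comm (Gt k) (Wp l) = 0"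
  and comm_Gt_Gt: "comm (Gt k) (Gt l) = 0"
  using relations unfolding Oq_rel_def by simp_all

lemma G1_eq: "G 0 = Gt 0 - sc (q + inverse q) * comm (Wm 0) (Wp 0)"
  using add_inverse_q_nonzero by (simp add: comm_W0_W1)

abbreviation Bd :: 'a where
  "Bd \<equiv> Bdelta sc q (Wm 0) (Wp 0)"

text \<open>Z commutes with W_0 and W_1, so on the B's commutation with tilde G_1 = Gt 0 acts as
  commutation with - q B_delta.\<close>

definition Z :: 'a where
  "Z = Gt 0 + sc q * Bd"

lemma comm_W0_Z: "comm (Wm 0) Z = 0"
proof -
  let ?X = "comm (Wm 0) (Wp 0)" and ?t = "q + inverse q"
  have "sc ?t * comm (Wm 0) (Gt 0) = qcomm sc q (Wm 0) (Gt 0) - qcomm sc q (Gt 0) (Wm 0)"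
    by (simp add: qcomm_swap_diff)
  also have "\<dots> = sc ?t * qcomm sc q (Wm 0) ?X"
    using qcomm_W0_G1 by (simp add: G1_eq qcomm_diff_right qcomm_sc_right algebra_simps)
  finally have "comm (Wm 0) (Gt 0) = qcomm sc q (Wm 0) ?X"
    using add_inverse_q_nonzero by (simp add: sc_mult_cancel)
  then show ?thesis
    using q_nonzero by (simp add: Z_def comm_add_right comm_sc_right qcomm_comm_Bdelta_left)
qed

lemma comm_W1_Z: "comm (Wp 0) Z = 0"
proof -
  let ?X = "comm (Wm 0) (Wp 0)" and ?t = "q + inverse q"
  have "sc ?t * comm (Wp 0) (Gt 0) = qcomm sc q (Wp 0) (Gt 0) - qcomm sc q (Gt 0) (Wp 0)"
    by (simp add: qcomm_swap_diff)
  also have "\<dots> = - (sc ?t * qcomm sc q ?X (Wp 0))"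
    using qcomm_G1_W1 by (simp add: G1_eq qcomm_diff_left qcomm_sc_left algebra_simps)
  finally have "comm (Wp 0) (Gt 0) = - qcomm sc q ?X (Wp 0)"
    using add_inverse_q_nonzero by (simp add: sc_mult_cancel flip: mult_minus_right)
  then show ?thesis
    using q_nonzero by (simp add: Z_def comm_add_right comm_sc_right qcomm_comm_Bdelta_right)
qed

abbreviation Bz :: "int \<Rightarrow> 'a" where
  "Bz \<equiv> BZ0 sc q (Wm 0) (Wp 0)"

lemma comm_Bz_Gt1:
  "comm (Bz m) (Gt 0) = sc (- rho q / (q + inverse q)) * (Bz (m + 1) - Bz (m - 1))"
proof -
  have div_Bcoef_q: "q / Bcoef q = - rho q / (q + inverse q)"
    using q_nonzero add_inverse_q_nonzero by (rule div_Bcoef)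
  then have "Bcoef q \<noteq> 0"
    using rho_nonzero add_inverse_q_nonzero by auto
  have "comm (Bz m) Z = 0"
    by (intro comm_BZ0_eq_0 comm_W0_Z comm_W1_Z)
  then have "comm (Bz m) (Gt 0) = sc q * comm Bd (Bz m)"
    by (simp add: Z_def comm_add_right comm_sc_right comm_swap[of "Bz m" Bd])
  also have "\<dots> = sc (q / Bcoef q) * (Bz (m + 1) - Bz (m - 1))"
    using \<open>Bcoef q \<noteq> 0\<close> by (simp add: BZ0_recurrence)
  finally show ?thesis
    unfolding div_Bcoef_q .
qed

text \<open>Wsum 0 n and Wsum (- 1) n are the right-hand sides of the two formulas.\<close>

definition alpha :: "nat \<Rightarrow> 'f" where
  "alpha k = inverse (rho q) * (q - inverse q) * inverse (q + inverse q) ^ k"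

definition Wsum :: "int \<Rightarrow> nat \<Rightarrow> 'a" where
  "Wsum s n = (\<Sum>k\<le>n. sc (alpha k) * shift_binomial q Bz s k * Gtil sc q Gt (n - k))"

lemma comm_Gtil_Gt1: "comm (Gtil sc q Gt j) (Gt 0) = 0"
  by (cases j) (simp_all add: Gtil_def comm_sc comm_Gt_Gt)

lemma comm_Wsum_Gt1:
  "comm (Wsum s n) (Gt 0)
    = (\<Sum>k\<le>n. sc (alpha k) * comm (shift_binomial q Bz s k) (Gt 0) * Gtil sc q Gt (n - k))"
  by (simp add: Wsum_def comm_sum_left comm_mult_left comm_sc_left comm_sc comm_Gtil_Gt1)

lemma Wsum_Suc_split:
  "Wsum s (Suc n) = sc (alpha 0) * (Bz s * Gt n)
    + (\<Sum>k\<le>n. sc (alpha (Suc k)) * shift_binomial q Bz s (Suc k) * Gtil sc q Gt (n - k))"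
  unfolding Wsum_def by (subst sum.atMost_Suc_shift) (simp add: Gtil_def mult.assoc)

lemma Wsum_Suc:
  "Wsum s (Suc n) = sc (alpha 0) * (Bz s * Gt n) + Wsum (s - 1) n
     - sc (inverse (rho q) * q) * comm (Wsum s n) (Gt 0)"
  "Wsum s (Suc n) = sc (alpha 0) * (Bz s * Gt n) + Wsum (s + 1) n
     + sc (inverse (rho q) * inverse q) * comm (Wsum s n) (Gt 0)"
proof -
  let ?P = "shift_binomial q Bz" and ?t = "q + inverse q"
  have c_nonzero: "- rho q / ?t \<noteq> 0"
    using rho_nonzero add_inverse_q_nonzero by simp
  have alpha_Suc: "alpha (Suc k) = alpha k * inverse ?t" for k
    by (simp add: alpha_def mult.assoc)
  have "a * inverse t * (x / (- r / t)) = - (inverse r * x * a)" if "t \<noteq> 0" "r \<noteq> 0"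
    for a t x r :: 'f
    using that by (simp add: field_simps)
  then have scale: "a * inverse ?t * ?t = a"
      "a * inverse ?t * (x / (- rho q / ?t)) = - (inverse (rho q) * x * a)" for a x
    using add_inverse_q_nonzero rho_nonzero by simp_all
  note step = shift_binomial_Suc_comm[OF q_nonzero c_nonzero comm_Bz_Gt1]
  have down: "sc (alpha (Suc k)) * ?P s (Suc k) = sc (alpha k) * ?P (s - 1) k
      - sc (inverse (rho q) * q) * (sc (alpha k) * comm (?P s k) (Gt 0))" for k
    unfolding step(1)[of s k] alpha_Suc distrib_left[where 'a = 'a] sc_sc_mult scale sc_minus
    by simp
  have up: "sc (alpha (Suc k)) * ?P s (Suc k) = sc (alpha k) * ?P (s + 1) k
      + sc (inverse (rho q) * inverse q) * (sc (alpha k) * comm (?P s k) (Gt 0))" for k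
    unfolding step(2)[of s k] alpha_Suc right_diff_distrib[where 'a = 'a] sc_sc_mult scale sc_minus
    by simp
  have "(\<Sum>k\<le>n. sc (alpha (Suc k)) * ?P s (Suc k) * Gtil sc q Gt (n - k))
      = Wsum (s - 1) n - sc (inverse (rho q) * q) * comm (Wsum s n) (Gt 0)"
    unfolding comm_Wsum_Gt1 unfolding Wsum_def down
    by (simp add: left_diff_distrib sum_subtractf sum_distrib_left mult.assoc)
  then show "Wsum s (Suc n) = sc (alpha 0) * (Bz s * Gt n) + Wsum (s - 1) n
     - sc (inverse (rho q) * q) * comm (Wsum s n) (Gt 0)"
    by (simp add: Wsum_Suc_split add_diff_eq)
  have "(\<Sum>k\<le>n. sc (alpha (Suc k)) * ?P s (Suc k) * Gtil sc q Gt (n - k))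
      = Wsum (s + 1) n + sc (inverse (rho q) * inverse q) * comm (Wsum s n) (Gt 0)"
    unfolding comm_Wsum_Gt1 unfolding Wsum_def up
    by (simp add: distrib_right sum.distrib sum_distrib_left mult.assoc)
  then show "Wsum s (Suc n) = sc (alpha 0) * (Bz s * Gt n) + Wsum (s + 1) n
     + sc (inverse (rho q) * inverse q) * comm (Wsum s n) (Gt 0)"
    by (simp add: Wsum_Suc_split add.assoc)
qed

lemma Wm_Suc:
  "Wm (Suc n) = sc (alpha 0) * (Wm 0 * Gt n) + Wp n - sc (inverse (rho q) * q) * comm (Wm n) (Gt 0)"
proof -
  have "comm (Gt n) (Wm 0) = - comm (Wm n) (Gt 0)"
    using comm_Wm_Gt[of n 0] by (simp add: eq_neg_iff_add_eq_0 add.commute)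
  then have "sc (rho q) * (Wm (Suc n) - Wp n)
      = sc (q - inverse q) * (Wm 0 * Gt n) - sc q * comm (Wm n) (Gt 0)"
    by (simp add: qcomm_Gt_W0[symmetric] qcomm_eq_comm_yx)
  then have "Wm (Suc n) - Wp n
      = sc (inverse (rho q)) * (sc (q - inverse q) * (Wm 0 * Gt n) - sc q * comm (Wm n) (Gt 0))"
    unfolding sc_mult_eq_iff[OF rho_nonzero] .
  then show ?thesis
    by (simp add: diff_eq_eq alpha_def right_diff_distrib)
qed

lemma Wp_Suc:
  "Wp (Suc n) = sc (alpha 0) * (Wp 0 * Gt n) + Wm n
     + sc (inverse (rho q) * inverse q) * comm (Wp n) (Gt 0)"
proof -
  have "comm (Wp 0) (Gt n) = comm (Wp n) (Gt 0)"
    using comm_Wp_Gt[of 0 n] comm_swap[of "Gt 0" "Wp n"] by (simp add: eq_neg_iff_add_eq_0)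
  then have "sc (rho q) * (Wp (Suc n) - Wm n)
      = sc (q - inverse q) * (Wp 0 * Gt n) + sc (inverse q) * comm (Wp n) (Gt 0)"
    by (simp add: qcomm_W1_Gt[symmetric] qcomm_eq_comm_xy)
  then have "Wp (Suc n) - Wm n
      = sc (inverse (rho q))
        * (sc (q - inverse q) * (Wp 0 * Gt n) + sc (inverse q) * comm (Wp n) (Gt 0))"
    unfolding sc_mult_eq_iff[OF rho_nonzero] .
  then show ?thesis
    by (simp add: diff_eq_eq alpha_def distrib_left)
qed

lemma alpha_0_Gtil_0: "alpha 0 * (- (q - inverse q) * qint q 2 ^ 2) = 1"
proof -
  have "inverse (- ((e * t) ^ 2)) * e * inverse t ^ 0 * (- e * t ^ 2) = 1"
    if "e \<noteq> 0" "t \<noteq> 0" for e t :: 'f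
    using that by (simp add: field_simps power2_eq_square)
  then show ?thesis
    unfolding alpha_def qint_2[OF q_nonzero diff_inverse_q_nonzero] rho_factor
    using diff_inverse_q_nonzero add_inverse_q_nonzero by blast
qed

lemma Wsum_0: "Wsum s 0 = Bz s"
proof -
  let ?g = "- (q - inverse q) * qint q 2 ^ 2"
  have "Wsum s 0 = sc (alpha 0) * (Bz s * sc ?g)"
    unfolding Wsum_def Gtil_def by (simp add: mult.assoc)
  also have "\<dots> = sc (alpha 0 * ?g) * Bz s"
    by (simp only: sc_commute[symmetric] sc_sc_mult)
  finally show ?thesis
    by (simp only: alpha_0_Gtil_0 sc_one mult_1_left)
qed

lemma W_eq_Wsum: "Wm n = Wsum 0 n \<and> Wp n = Wsum (- 1) n"
proof (induction n)
  case 0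
  then show ?case by (simp add: Wsum_0 BZ0_def)
next
  case (Suc n)
  then show ?case
    using Wsum_Suc(1)[of 0 n] Wsum_Suc(2)[of "- 1" n]
    by (simp add: Wm_Suc Wp_Suc BZ0_def add.commute)
qed

lemma alpha_eq_qint_powi: "alpha k = - (inverse (q - inverse q) * qint q 2 powi (- int k - 2))"
proof -
  have "inverse (- ((e * t) ^ 2)) * e * inverse t ^ k
      = - (inverse e * (inverse t ^ k * inverse (t ^ 2)))"
    if "e \<noteq> 0" "t \<noteq> 0" for e t :: 'f
    using that by (simp add: field_simps power2_eq_square)
  moreover have "qint q 2 powi (- int k - 2)
      = inverse (q + inverse q) ^ k * inverse ((q + inverse q) ^ 2)"
  proof -
    have "- int k - 2 = - int (k + 2)"
      by simp
    then show ?thesis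
      unfolding qint_2[OF q_nonzero diff_inverse_q_nonzero]
      by (simp only: power_int_minus power_int_of_nat power_add inverse_mult_distrib power_inverse)
  qed
  ultimately show ?thesis
    unfolding alpha_def rho_factor using diff_inverse_q_nonzero add_inverse_q_nonzero by simp
qed

lemma Wsum_shift_0_expanded:
  "Wsum 0 n = - (sc (inverse (q - inverse q)) *
      (\<Sum>k\<le>n. \<Sum>l\<le>k. sc (of_nat (k choose l) * q powi (int k - 2 * int l)
          * (qint q 2) powi (- int k - 2))
        * BZ0 sc q (Wm 0) (Wp 0) (int k - 2 * int l) * Gtil sc q Gt (n - k)))"
  unfolding Wsum_def shift_binomial_def alpha_eq_qint_powi
  by (simp add: sum_distrib_left sum_distrib_right sc_minus of_nat_mult_sc sum_negf
      mult.assoc[where 'a = 'a] mult_ac[where 'a = 'f])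

lemma Wsum_shift_minus_1_expanded:
  "Wsum (- 1) n = - (sc (inverse (q - inverse q)) *
      (\<Sum>k\<le>n. \<Sum>l\<le>k. sc (of_nat (k choose l) * q powi (2 * int l - int k)
          * (qint q 2) powi (- int k - 2))
        * BZ1 sc q (Wm 0) (Wp 0) (int k - 2 * int l) * Gtil sc q Gt (n - k)))"
  unfolding Wsum_def shift_binomial_reflect alpha_eq_qint_powi BZ1_eq_BZ0
  by (simp add: sum_distrib_left sum_distrib_right sc_minus of_nat_mult_sc sum_negf
      mult.assoc[where 'a = 'a] mult_ac[where 'a = 'f] algebra_simps[where 'a = int])

end

theorem proposition11p7:
  fixes sc :: "'f::field \<Rightarrow> 'a::ring_1" and q :: 'f
    and Wm Wp G Gt :: "nat \<Rightarrow> 'a" and n :: nat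
  assumes "is_alg_map sc"
    and "q \<noteq> 0" and "\<forall>m::nat. m > 0 \<longrightarrow> q ^ m \<noteq> 1"
    and "Oq_rel sc q Wm Wp G Gt"
  shows "Wm n = - (sc (inverse (q - inverse q)) *
           (\<Sum>k\<le>n. \<Sum>l\<le>k. sc (of_nat (k choose l) * q powi (int k - 2 * int l)
               * (qint q 2) powi (- int k - 2))
             * BZ0 sc q (Wm 0) (Wp 0) (int k - 2 * int l) * Gtil sc q Gt (n - k)))
     \<and> Wp n = - (sc (inverse (q - inverse q)) *
           (\<Sum>k\<le>n. \<Sum>l\<le>k. sc (of_nat (k choose l) * q powi (2 * int l - int k)
               * (qint q 2) powi (- int k - 2))
             * BZ1 sc q (Wm 0) (Wp 0) (int k - 2 * int l) * Gtil sc q Gt (n - k)))"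
proof -
  interpret Oq_family sc q Wm Wp G Gt
    using assms by unfold_locales
  show ?thesis
    using W_eq_Wsum[of n] unfolding Wsum_shift_0_expanded Wsum_shift_minus_1_expanded .
qed

end
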